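(* Let $\varphi(x)=a_nx^n+\cdots+a_0\in\mathbb{C}[x]$, $a_n\ne0$, have $n$ distinct roots $x_1,\dots,x_n$, let $R\subset\mathbb{C}(x)$ be the subring of rational functions defined at all roots of $\varphi$, and let $h\in R$. If $r(x)=b_{n-1}x^{n-1}+\cdots+b_0$ is the unique polynomial of degree $<n$ representing the coset of $\varphi'(x)h(x)$ in $R/(\varphi)$, then $\sum_{i=1}^nh(x_i)=\dfrac{b_{n-1}}{a_n}$.
   Context: $(\varphi)$ denotes the ideal generated by $\varphi$ in $R$; $R/(\varphi)\cong\mathbb{C}[x]/(\varphi)$. *)

theory Defs
  imports "HOL-Computational_Algebra.Polynomial" "HOL-Computational_Algebra.Fraction_Field"
begin

type_synonym ratfun = "complex poly fract"

definition poly_to_ratfun :: "complex poly \<Rightarrow> ratfun" where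
  "poly_to_ratfun p = Fract p 1"

definition defined_at :: "ratfun \<Rightarrow> complex \<Rightarrow> bool" where
  "defined_at f z \<longleftrightarrow> (\<exists>p q. f = Fract p q \<and> poly q z \<noteq> 0)"

definition eval_ratfun :: "ratfun \<Rightarrow> complex \<Rightarrow> complex" where
  "eval_ratfun f z = (THE c. \<exists>p q. f = Fract p q \<and> poly q z \<noteq> 0 \<and> c = poly p z / poly q z)"

definition R_ring :: "complex poly \<Rightarrow> ratfun set" where
  "R_ring \<phi> = {f. \<forall>z. poly \<phi> z = 0 \<longrightarrow> defined_at f z}"

definition cong_R :: "complex poly \<Rightarrow> ratfun \<Rightarrow> ratfun \<Rightarrow> bool" where
  "cong_R \<phi> f g \<longleftrightarrow> (\<exists>k\<in>R_ring \<phi>. f - g = poly_to_ratfun \<phi> * k)"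

end

theory Submission
  imports Defs
begin

(*
  Let S be the root set of phi, with card S = n = degree phi, and a = lead_coeff phi.
  (1) Evaluating the congruence  phi' * h == r  (mod phi)  at a root z kills the multiple of phi,
      so  phi'(z) * h(z) = r(z)  for every z in S.
  (2) Since phi has n distinct roots, phi = a * prod_{w in S} (x - w), hence
      phi'(z) = a * l_z(z), where  l_z = prod_{w in S - {z}} (x - w)  is the unnormalised
      Lagrange basis polynomial at z; in particular phi'(z) is nonzero.
  (3) Lagrange interpolation: every r with degree r < card S equals
      sum_z r(z)/l_z(z) * l_z; as each l_z is monic of degree card S - 1, comparing the
      coefficients of x^(n-1) gives  b_(n-1) = sum_z r(z)/l_z(z).
  Combining, sum_z h(z) = sum_z r(z) / (a * l_z(z)) = b_(n-1) / a.
*)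

lemma eval_ratfun_Fract:
  assumes "poly q z \<noteq> 0"
  shows "eval_ratfun (Fract p q) z = poly p z / poly q z"
  unfolding eval_ratfun_def
proof (rule the_equality)
  show "\<exists>p' q'. Fract p q = Fract p' q' \<and> poly q' z \<noteq> 0 \<and> poly p z / poly q z = poly p' z / poly q' z"
    using assms by blast
next
  fix c assume "\<exists>p' q'. Fract p q = Fract p' q' \<and> poly q' z \<noteq> 0 \<and> c = poly p' z / poly q' z"
  then obtain p' q' where e: "Fract p q = Fract p' q'" "poly q' z \<noteq> 0" "c = poly p' z / poly q' z"
    by blast
  have "q \<noteq> 0" "q' \<noteq> 0" using assms e(2) by auto
  with e(1) have "p * q' = p' * q" by (simp add: eq_fract)
  hence "poly p z * poly q' z = poly p' z * poly q z" by (metis poly_mult)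
  hence "poly p z / poly q z = poly p' z / poly q' z" using e(2) assms
    by (simp add: frac_eq_eq)
  thus "c = poly p z / poly q z" using e(3) by simp
qed

lemma cong_R_value_at_root:
  assumes h: "h \<in> R_ring \<phi>"
    and cong: "cong_R \<phi> (poly_to_ratfun f * h) (poly_to_ratfun r)"
    and root: "poly \<phi> z = 0"
  shows "poly f z * eval_ratfun h z = poly r z"
proof -
  from h root obtain p q where hq: "h = Fract p q" "poly q z \<noteq> 0"
    unfolding R_ring_def defined_at_def by blast
  from cong obtain k where k: "k \<in> R_ring \<phi>"
    "poly_to_ratfun f * h - poly_to_ratfun r = poly_to_ratfun \<phi> * k"
    unfolding cong_R_def by blast
  from k(1) root obtain c e where ce: "k = Fract c e" "poly e z \<noteq> 0"
    unfolding R_ring_def defined_at_def by blast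
  have nz: "q \<noteq> 0" "e \<noteq> 0" using hq ce by auto
  have "Fract (f * p - r * q) q = Fract f 1 * Fract p q - Fract r 1"
    using diff_fract[OF nz(1) one_neq_zero, of "f * p" r] by simp
  also have "\<dots> = Fract (\<phi> * c) e"
    using k(2) unfolding poly_to_ratfun_def hq ce by simp
  finally have "(f * p - r * q) * e = (\<phi> * c) * q" using nz by (simp add: eq_fract)
  hence "poly ((f * p - r * q) * e) z = poly ((\<phi> * c) * q) z" by simp
  hence "(poly f z * poly p z - poly r z * poly q z) * poly e z = 0"
    using root by simp
  hence "poly f z * poly p z = poly r z * poly q z" using ce(2) by simp
  thus ?thesis using hq by (simp add: eval_ratfun_Fract divide_simps)
qed

definition lagrange_basis :: "'a::field set \<Rightarrow> 'a \<Rightarrow> 'a poly" where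
  "lagrange_basis S z = (\<Prod>w\<in>S - {z}. [:-w, 1:])"

lemma poly_lagrange_basis: "poly (lagrange_basis S z) y = (\<Prod>w\<in>S - {z}. y - w)"
  unfolding lagrange_basis_def by (simp add: poly_prod)

lemma lagrange_basis_nonzero_at_node:
  "finite S \<Longrightarrow> poly (lagrange_basis S z) z \<noteq> 0"
  unfolding poly_lagrange_basis by auto

lemma lagrange_basis_zero_at_other_node:
  "finite S \<Longrightarrow> y \<in> S \<Longrightarrow> y \<noteq> z \<Longrightarrow> poly (lagrange_basis S z) y = 0"
  unfolding poly_lagrange_basis by (auto intro!: prod_zero)

lemma degree_lagrange_basis:
  "finite S \<Longrightarrow> z \<in> S \<Longrightarrow> degree (lagrange_basis S z) = card S - 1"
  unfolding lagrange_basis_def by (subst degree_prod_eq_sum_degree) auto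

lemma lead_coeff_lagrange_basis: "lead_coeff (lagrange_basis S z) = 1"
  unfolding lagrange_basis_def by (simp add: lead_coeff_prod)

lemma lagrange_interpolation:
  assumes fin: "finite S" and deg: "degree r < card S"
  shows "r = (\<Sum>z\<in>S. smult (poly r z / poly (lagrange_basis S z) z) (lagrange_basis S z))"
    (is "r = ?L")
proof (rule poly_eqI_degree[of S])
  fix y assume y: "y \<in> S"
  have "poly ?L y = (\<Sum>z\<in>S. poly r z / poly (lagrange_basis S z) z * poly (lagrange_basis S z) y)"
    by (simp add: poly_sum)
  also have "\<dots> = poly r y / poly (lagrange_basis S y) y * poly (lagrange_basis S y) y"
    using fin y
    by (subst sum.remove[of _ y]) (auto intro!: sum.neutral lagrange_basis_zero_at_other_node)
  also have "\<dots> = poly r y" using lagrange_basis_nonzero_at_node[OF fin] by simp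
  finally show "poly r y = poly ?L y" by simp
next
  show "degree r < card S" by (fact deg)
  have "degree ?L \<le> card S - 1"
    by (rule degree_sum_le)
      (auto simp: fin degree_lagrange_basis intro: order.trans[OF degree_smult_le])
  thus "degree ?L < card S" using deg by simp
qed

lemma lagrange_top_coeff:
  assumes fin: "finite S" and deg: "degree r < card S"
  shows "coeff r (card S - 1) = (\<Sum>z\<in>S. poly r z / poly (lagrange_basis S z) z)"
proof -
  have "coeff r (card S - 1)
      = (\<Sum>z\<in>S. poly r z / poly (lagrange_basis S z) z * coeff (lagrange_basis S z) (card S - 1))"
    by (subst lagrange_interpolation[OF fin deg]) (simp add: coeff_sum)
  also have "\<dots> = (\<Sum>z\<in>S. poly r z / poly (lagrange_basis S z) z)"
  proof (rule sum.cong)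
    fix z assume "z \<in> S"
    hence "coeff (lagrange_basis S z) (card S - 1) = 1"
      using degree_lagrange_basis[OF fin] lead_coeff_lagrange_basis by metis
    thus "poly r z / poly (lagrange_basis S z) z * coeff (lagrange_basis S z) (card S - 1)
        = poly r z / poly (lagrange_basis S z) z" by simp
  qed simp
  finally show ?thesis .
qed

lemma split_distinct_roots:
  fixes \<phi> :: "'a::field poly"
  assumes "\<phi> \<noteq> 0" and roots: "card {z. poly \<phi> z = 0} = degree \<phi>"
  shows "\<phi> = smult (lead_coeff \<phi>) (\<Prod>w\<in>{z. poly \<phi> z = 0}. [:-w, 1:])"
proof -
  define S where "S = {z. poly \<phi> z = 0}"
  have fin: "finite S" using poly_roots_finite[OF assms(1)] by (simp add: S_def)
  have degP: "degree (\<Prod>w\<in>S. [:-w, 1:]) = card S"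
    using fin by (subst degree_prod_eq_sum_degree) auto
  have "\<phi> = smult (lead_coeff \<phi>) (\<Prod>w\<in>S. [:-w, 1:])"
  proof (rule poly_eqI_degree_lead_coeff[where n = "degree \<phi>" and A = S])
    have "lead_coeff (\<Prod>w\<in>S. [:-w, 1:]) = 1" by (simp add: lead_coeff_prod)
    thus "coeff \<phi> (degree \<phi>) = coeff (smult (lead_coeff \<phi>) (\<Prod>w\<in>S. [:-w, 1:])) (degree \<phi>)"
      using degP roots by (simp add: S_def)
    show "degree (smult (lead_coeff \<phi>) (\<Prod>w\<in>S. [:-w, 1:])) \<le> degree \<phi>"
      using degP roots by (simp add: S_def)
    fix z assume "z \<in> S"
    thus "poly \<phi> z = poly (smult (lead_coeff \<phi>) (\<Prod>w\<in>S. [:-w, 1:])) z"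
      using fin by (auto simp: S_def poly_prod)
  qed (use roots in \<open>simp_all add: S_def\<close>)
  thus ?thesis by (simp add: S_def)
qed

text \<open>At a root z of such a polynomial, the derivative is the leading coefficient times the
  Lagrange basis polynomial of z evaluated at z (product rule; all other terms vanish).\<close>
lemma pderiv_at_distinct_root:
  fixes \<phi> :: "'a::field poly"
  defines "S \<equiv> {z. poly \<phi> z = 0}"
  assumes "\<phi> \<noteq> 0" and "card S = degree \<phi>" and z: "z \<in> S"
  shows "poly (pderiv \<phi>) z = lead_coeff \<phi> * poly (lagrange_basis S z) z"
proof -
  have fin: "finite S" using poly_roots_finite[OF assms(2)] by (simp add: S_def)
  have "pderiv \<phi> = smult (lead_coeff \<phi>) (\<Sum>x\<in>S. lagrange_basis S x)"
    by (subst split_distinct_roots[OF assms(2,3)[unfolded S_def]])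
      (simp add: S_def pderiv_smult pderiv_prod lagrange_basis_def pderiv_pCons)
  hence "poly (pderiv \<phi>) z = lead_coeff \<phi> * (\<Sum>x\<in>S. poly (lagrange_basis S x) z)"
    by (simp add: poly_sum)
  also have "(\<Sum>x\<in>S. poly (lagrange_basis S x) z) = poly (lagrange_basis S z) z"
    using fin z
    by (subst sum.remove[of _ z]) (auto intro!: sum.neutral lagrange_basis_zero_at_other_node)
  finally show ?thesis .
qed

theorem corollary9p3:
  fixes \<phi> r :: "complex poly" and h :: ratfun and n :: nat
  assumes "\<phi> \<noteq> 0" and "degree \<phi> = n"
    and "card {z. poly \<phi> z = 0} = n"
    and "h \<in> R_ring \<phi>"
    and "degree r < n"
    and "cong_R \<phi> (poly_to_ratfun (pderiv \<phi>) * h) (poly_to_ratfun r)"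
  shows "(\<Sum>z\<in>{z. poly \<phi> z = 0}. eval_ratfun h z) = coeff r (n - 1) / lead_coeff \<phi>"
proof -
  define S where "S = {z. poly \<phi> z = 0}"
  define a where "a = lead_coeff \<phi>"
  have fin: "finite S" using poly_roots_finite[OF assms(1)] by (simp add: S_def)
  have "eval_ratfun h z = poly r z / poly (lagrange_basis S z) z / a" if z: "z \<in> S" for z
  proof -
    have deriv: "poly (pderiv \<phi>) z = a * poly (lagrange_basis S z) z"
      unfolding a_def S_def by (rule pderiv_at_distinct_root) (use assms z in \<open>simp_all add: S_def\<close>)
    have nonzero: "a * poly (lagrange_basis S z) z \<noteq> 0"
      using assms(1) lagrange_basis_nonzero_at_node[OF fin] by (simp add: a_def)
    have "poly (pderiv \<phi>) z * eval_ratfun h z = poly r z"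
      using cong_R_value_at_root[OF assms(4,6)] z by (simp add: S_def)
    hence "eval_ratfun h z = poly r z / (a * poly (lagrange_basis S z) z)"
      using nonzero unfolding deriv by (simp add: eq_divide_eq mult.commute)
    thus ?thesis by simp
  qed
  hence "(\<Sum>z\<in>S. eval_ratfun h z) = (\<Sum>z\<in>S. poly r z / poly (lagrange_basis S z) z) / a"
    by (simp add: sum_divide_distrib)
  also have "\<dots> = coeff r (n - 1) / a"
    using lagrange_top_coeff[OF fin] assms(3,5) by (simp add: S_def)
  finally show ?thesis by (simp add: S_def a_def)
qed

end
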